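(* A point $\mathbf{x}\in\Delta^0$ is a local maximizer of the problem $\max\{f(\mathbf{x}):\mathbf{x}\in\Delta^0\}$ if and only if $\mathbf{x}=\mathbf{x}(C)$ for some maximal clique $C$ of $G$. Moreover, every local maximizer of this problem is a strict local maximizer.
   Context: Let $G=(\mathcal{V},\mathcal{E})$ be a simple undirected graph on vertex set $\mathcal{V}=\{1,\dots,n\}$ with adjacency matrix $\mathbf{A}=(a_{ij})$ ($a_{ij}=1$ if $(i,j)\in\mathcal{E}$, else $0$; $a_{ii}=0$). A clique is a subset $C\subseteq\mathcal{V}$ with $(i,j)\in\mathcal{E}$ for all distinct $i,j\in C$; it is maximal if it is not strictly contained in another clique. Let $\Delta=\{\mathbf{x}\in\mathbb{R}^n:\mathbf{0}\le\mathbf{x}\le\mathbf{1},\ \mathbf{1}^{\mathsf T}\mathbf{x}=1\}$, $\mathrm{supp}(\mathbf{x})=\{i:x_i\neq0\}$, and $\Delta^0=\{\mathbf{x}\in\Delta:\mathrm{supp}(\mathbf{x})\text{ is a clique}\}$. For a non-empty clique $C$, $\mathbf{x}(C)\in\Delta$ has $x(C)_i=1/|C|$ for $i\in C$ and $0$ otherwise. For $\mathbf{x}\in\Delta$, $\mathcal{P}(\mathbf{x})$ is the set of vectors in $\Delta$ obtained by permuting the coordinates of $\mathbf{x}$. Let $\Phi:X\to\mathbb{R}$ be twice continuously differentiable on an open set $X\supset\Delta$, satisfying for every $\mathbf{x}\in\Delta$: (C1) $\nabla^2\Phi(\mathbf{x})$ is positive semidefinite; (C2) $\|\nabla^2\Phi(\mathbf{x})\|_2<2$;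 (C3) $\Phi$ is constant on $\mathcal{P}(\mathbf{x})$. Define $f(\mathbf{x})=\mathbf{x}^{\mathsf T}\mathbf{A}\mathbf{x}+\Phi(\mathbf{x})$. A point $\mathbf{x}\in Y$ is a (strict) local maximizer of $\max\{f:Y\}$ if there is $\epsilon>0$ with $f(\mathbf{x})\ge f(\tilde{\mathbf{x}})$ (resp. $>$) for all $\tilde{\mathbf{x}}\in Y$ with $0<\|\tilde{\mathbf{x}}-\mathbf{x}\|_2<\epsilon$. *)

theory Defs
  imports "HOL-Analysis.Analysis"
begin

text \<open>Vertices are the elements of a finite type 'n (playing the role of {1..n});
  vectors in R^n are elements of real^'n.\<close>

definition simple_graph :: "('n \<Rightarrow> 'n \<Rightarrow> bool) \<Rightarrow> bool" where
  "simple_graph E \<longleftrightarrow> (\<forall>i j. E i j \<longleftrightarrow> E j i) \<and> (\<forall>i. \<not> E i i)"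

definition adj_matrix :: "('n::finite \<Rightarrow> 'n \<Rightarrow> bool) \<Rightarrow> real^'n^'n" where
  "adj_matrix E = (\<chi> i j. if E i j then 1 else 0)"

definition is_clique :: "('n \<Rightarrow> 'n \<Rightarrow> bool) \<Rightarrow> 'n set \<Rightarrow> bool" where
  "is_clique E C \<longleftrightarrow> (\<forall>i\<in>C. \<forall>j\<in>C. i \<noteq> j \<longrightarrow> E i j)"

definition maximal_clique :: "('n \<Rightarrow> 'n \<Rightarrow> bool) \<Rightarrow> 'n set \<Rightarrow> bool" where
  "maximal_clique E C \<longleftrightarrow> is_clique E C \<and> (\<forall>D. is_clique E D \<longrightarrow> C \<subseteq> D \<longrightarrow> D = C)"

definition std_simplex :: "(real^'n::finite) set" where
  "std_simplex = {x. (\<forall>i. 0 \<le> x $ i \<and> x $ i \<le> 1) \<and> (\<Sum>i\<in>UNIV. x $ i) = 1}"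

definition supp :: "real^'n \<Rightarrow> 'n set" where
  "supp x = {i. x $ i \<noteq> 0}"

definition clique_simplex :: "('n::finite \<Rightarrow> 'n \<Rightarrow> bool) \<Rightarrow> (real^'n) set" where
  "clique_simplex E = {x \<in> std_simplex. is_clique E (supp x)}"

definition clique_vec :: "'n::finite set \<Rightarrow> real^'n" where
  "clique_vec C = (\<chi> i. if i \<in> C then 1 / real (card C) else 0)"

definition perms_of :: "real^'n::finite \<Rightarrow> (real^'n) set" where
  "perms_of x = {(\<chi> i. x $ p i) | p. p permutes (UNIV :: 'n set)} \<inter> std_simplex"

definition local_maximizer :: "('a::metric_space \<Rightarrow> real) \<Rightarrow> 'a set \<Rightarrow> 'a \<Rightarrow> bool" where
  "local_maximizer f Y x \<longleftrightarrow> x \<in> Y \<and>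
     (\<exists>e>0. \<forall>y\<in>Y. 0 < dist y x \<and> dist y x < e \<longrightarrow> f x \<ge> f y)"

definition strict_local_maximizer :: "('a::metric_space \<Rightarrow> real) \<Rightarrow> 'a set \<Rightarrow> 'a \<Rightarrow> bool" where
  "strict_local_maximizer f Y x \<longleftrightarrow> x \<in> Y \<and>
     (\<exists>e>0. \<forall>y\<in>Y. 0 < dist y x \<and> dist y x < e \<longrightarrow> f x > f y)"

end

theory Submission
  imports Defs
begin

(*
  On the face of the simplex spanned by a clique T the quadratic part of f equals 1 - |x|^2,
  so there f = 1 - |x|^2 + Phi; since the Hessian of Phi has norm < 2, f is strictly concave
  along every segment of the face. Hence a local maximizer on the face is its unique global
  maximizer, and as f is invariant under swapping two coordinates in T (C3), this maximizer
  is the barycenter x(T). Applied to T = supp x and to every clique containing supp x, this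
  shows that a local maximizer is x(C) for a maximal clique C. Conversely, near x(C) with C
  maximal the clique simplex coincides with the face of C, on which x(C) is the strict
  global maximum.
*)

definition simplex_face :: "'n::finite set \<Rightarrow> (real^'n) set" where
  "simplex_face T = {x \<in> std_simplex. supp x \<subseteq> T}"

lemma simplex_face_supp: "x \<in> std_simplex \<Longrightarrow> x \<in> simplex_face (supp x)"
  by (simp add: simplex_face_def)

lemma simplex_face_subset_clique_simplex:
  "is_clique E T \<Longrightarrow> simplex_face T \<subseteq> clique_simplex E"
  by (auto simp: simplex_face_def clique_simplex_def is_clique_def)

lemma simplex_face_eq:
  "simplex_face T = {x. (\<forall>i. 0 \<le> x $ i \<and> x $ i \<le> 1) \<and> (\<Sum>i\<in>UNIV. x $ i) = 1 \<and> (\<forall>i\<in>-T. x $ i = 0)}"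
  by (auto simp: simplex_face_def std_simplex_def supp_def)

lemma convex_simplex_face: "convex (simplex_face T)"
  unfolding convex_def simplex_face_eq
proof (intro ballI allI impI, clarify, intro conjI allI ballI)
  fix x y :: "real^'a" and u v :: real and i
  assume x: "\<forall>i. 0 \<le> x $ i \<and> x $ i \<le> 1" "(\<Sum>i\<in>UNIV. x $ i) = 1" "\<forall>i\<in>-T. x $ i = 0"
    and y: "\<forall>i. 0 \<le> y $ i \<and> y $ i \<le> 1" "(\<Sum>i\<in>UNIV. y $ i) = 1" "\<forall>i\<in>-T. y $ i = 0"
    and uv: "0 \<le> u" "0 \<le> v" "u + v = 1"
  have "u * x $ i + v * y $ i \<le> u * 1 + v * 1"
    using x(1) y(1) uv by (intro add_mono mult_left_mono) auto
  then show "(u *\<^sub>R x + v *\<^sub>R y) $ i \<le> 1" using uv by simp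
  show "0 \<le> (u *\<^sub>R x + v *\<^sub>R y) $ i" using x(1) y(1) uv by simp
  show "(\<Sum>i\<in>UNIV. (u *\<^sub>R x + v *\<^sub>R y) $ i) = 1"
    using x(2) y(2) uv by (simp add: sum.distrib sum_distrib_left[symmetric])
  show "(u *\<^sub>R x + v *\<^sub>R y) $ i = 0" if "i \<in> -T" for i using x(3) y(3) that by simp
qed

lemma compact_simplex_face: "compact (simplex_face T)"
proof (rule compact_eq_bounded_closed[THEN iffD2, OF conjI])
  show "bounded (simplex_face T)"
    by (rule bounded_subset[OF bounded_cbox[of 0 1]]) (auto simp: simplex_face_eq mem_box_cart)
  have "simplex_face T = {x. (\<forall>i. 0 \<le> x $ i) \<and> (\<forall>i. x $ i \<le> 1) \<and> (\<Sum>i\<in>UNIV. x $ i) = 1}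
      \<inter> (\<Inter>i\<in>-T. {x. x $ i = 0})"
    by (auto simp: simplex_face_eq)
  also have "closed \<dots>"
    by (intro closed_Int closed_INT ballI closed_Collect_conj closed_Collect_all closed_Collect_le
        closed_Collect_eq continuous_intros)
  finally show "closed (simplex_face T)" .
qed

lemma simplex_face_index_nonempty: "x \<in> simplex_face T \<Longrightarrow> T \<noteq> {}"
  by (auto simp: simplex_face_eq)

lemma supp_clique_vec: "supp (clique_vec C) = C"
  by (auto simp: supp_def clique_vec_def card_gt_0_iff)

lemma clique_vec_in_simplex_face:
  assumes "C \<noteq> {}"
  shows "clique_vec C \<in> simplex_face C"
proof -
  have "(\<Sum>i\<in>UNIV. clique_vec C $ i) = (\<Sum>i\<in>C. 1 / real (card C))"
    by (rule sum.mono_neutral_cong_right) (auto simp: clique_vec_def)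
  moreover have "card C > 0" using assms by (simp add: card_gt_0_iff)
  ultimately show ?thesis
    by (auto simp: simplex_face_eq clique_vec_def)
qed

lemma supp_superset_near_clique_vec:
  assumes "i \<in> C" "dist y (clique_vec C) < 1 / real (card C)"
  shows "i \<in> supp y"
proof -
  have "\<bar>y $ i - 1 / real (card C)\<bar> \<le> dist y (clique_vec C)"
    using component_le_norm_cart[of "y - clique_vec C" i] assms(1)
    by (simp add: dist_norm clique_vec_def)
  then show ?thesis using assms(2) by (auto simp: supp_def)
qed

lemma maximal_clique_nonempty:
  fixes E :: "'a \<Rightarrow> 'a \<Rightarrow> bool"
  assumes "maximal_clique E C"
  shows "C \<noteq> {}"
proof
  assume "C = {}"
  moreover obtain i :: 'a where True by blast
  moreover have "is_clique E {i}" by (simp add: is_clique_def)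
  ultimately show False using assms unfolding maximal_clique_def by blast
qed

lemma simplex_face_constant_eq_clique_vec:
  assumes x: "x \<in> simplex_face T" and const: "\<And>i j. i \<in> T \<Longrightarrow> j \<in> T \<Longrightarrow> x $ i = x $ j"
  shows "x = clique_vec T"
proof -
  have zero: "x $ i = 0" if "i \<notin> T" for i
    using x that by (simp add: simplex_face_eq)
  obtain i0 where i0: "i0 \<in> T" using simplex_face_index_nonempty[OF x] by blast
  have "1 = (\<Sum>i\<in>UNIV. x $ i)" using x by (simp add: simplex_face_eq)
  also have "\<dots> = (\<Sum>i\<in>T. x $ i0)"
    by (rule sum.mono_neutral_cong_right) (auto simp: zero const[OF _ i0])
  also have "\<dots> = real (card T) * x $ i0" by simp
  finally have "x $ i0 = 1 / real (card T)"
    by (metis divide_eq_eq mult.commute mult_zero_left zero_neq_one)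
  then have "x $ i = clique_vec T $ i" for i
    using zero[of i] const[OF _ i0, of i] by (cases "i \<in> T") (simp_all add: clique_vec_def)
  then show ?thesis by (simp add: vec_eq_iff)
qed

lemma sum_permute_coords:
  assumes "p permutes (UNIV :: 'n::finite set)"
  shows "(\<Sum>k\<in>UNIV. g (x $ p k)) = (\<Sum>k\<in>UNIV. g (x $ k))"
  using sum.permute[OF assms, of "\<lambda>k. g (x $ k)"] by (simp add: o_def)

lemma inner_permute_coords:
  fixes x :: "real^'n::finite"
  assumes "p permutes UNIV"
  shows "(\<chi> k. x $ p k) \<bullet> (\<chi> k. x $ p k) = x \<bullet> x"
  using sum_permute_coords[OF assms, of "\<lambda>r. r * r" x] by (simp add: inner_vec_def)

lemma transpose_coords_in_simplex_face:
  assumes x: "x \<in> simplex_face T" and ij: "i \<in> T" "j \<in> T"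
  shows "(\<chi> k. x $ Transposition.transpose i j k) \<in> simplex_face T"
proof -
  have "Transposition.transpose i j permutes UNIV" by (rule permutes_swap_id) auto
  moreover have "Transposition.transpose i j k = k" if "k \<notin> T" for k
    using that ij by (metis transpose_apply_other)
  ultimately show ?thesis
    using sum_permute_coords[of "Transposition.transpose i j" "\<lambda>r. r" x] x
    by (auto simp: simplex_face_eq)
qed

lemma transpose_coords_in_perms_of:
  assumes "x \<in> std_simplex" "(\<chi> k. x $ Transposition.transpose i j k) \<in> std_simplex"
  shows "(\<chi> k. x $ Transposition.transpose i j k) \<in> perms_of x"
  using assms permutes_swap_id[of i UNIV j] by (auto simp: perms_of_def)

lemma symmetric_unique_maximizer_eq_clique_vec:
  fixes g :: "real^'n::finite \<Rightarrow> real"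
  assumes x: "x \<in> simplex_face T"
    and unique: "\<And>y. y \<in> simplex_face T \<Longrightarrow> y \<noteq> x \<Longrightarrow> g y < g x"
    and sym: "\<And>y i j. y \<in> simplex_face T \<Longrightarrow> i \<in> T \<Longrightarrow> j \<in> T \<Longrightarrow>
                g (\<chi> k. y $ Transposition.transpose i j k) = g y"
  shows "x = clique_vec T"
proof (rule simplex_face_constant_eq_clique_vec[OF x])
  fix i j assume ij: "i \<in> T" "j \<in> T"
  let ?y = "\<chi> k. x $ Transposition.transpose i j k"
  have "?y \<in> simplex_face T" "g ?y = g x"
    using transpose_coords_in_simplex_face[OF x ij] sym[OF x ij] by auto
  then have "?y = x" using unique by force
  then show "x $ i = x $ j" by (metis transpose_apply_first vec_lambda_beta)
qed

lemma clique_quadratic_form: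
  assumes graph: "simple_graph E" and clique: "is_clique E (supp x)"
    and sum1: "(\<Sum>i\<in>UNIV. x $ i) = 1"
  shows "x \<bullet> (adj_matrix E *v x) = 1 - x \<bullet> x"
proof -
  have edge: "(if E i j then x $ i * x $ j else 0) = x $ i * x $ j - (if i = j then x $ i * x $ j else 0)"
    for i j
    using graph clique by (cases "x $ i = 0 \<or> x $ j = 0")
      (auto simp: is_clique_def simple_graph_def supp_def)
  have "x \<bullet> (adj_matrix E *v x) = (\<Sum>i\<in>UNIV. \<Sum>j\<in>UNIV. if E i j then x $ i * x $ j else 0)"
    by (simp add: inner_vec_def matrix_vector_mult_def adj_matrix_def sum_distrib_left)
      (intro sum.cong refl; simp)
  also have "\<dots> = (\<Sum>i\<in>UNIV. x $ i * (\<Sum>j\<in>UNIV. x $ j) - x $ i * x $ i)"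
    by (simp only: edge) (simp add: sum_subtractf sum_distrib_left)
  also have "\<dots> = 1 - x \<bullet> x"
    using sum1 by (simp add: sum_subtractf inner_vec_def)
  finally show ?thesis .
qed

lemma inner_matrix_vector_lt_onorm:
  fixes M :: "real^'n^'n"
  assumes "onorm (\<lambda>v. M *v v) < c" "d \<noteq> 0"
  shows "(M *v d) \<bullet> d < c * (d \<bullet> d)"
proof -
  have nd: "norm d > 0" using assms(2) by simp
  have "(M *v d) \<bullet> d \<le> norm (M *v d) * norm d" by (rule norm_cauchy_schwarz)
  also have "\<dots> \<le> onorm (\<lambda>v. M *v v) * norm d * norm d"
    using onorm[OF matrix_vector_mul_bounded_linear, of M d] nd by (intro mult_right_mono) auto
  also have "\<dots> < c * norm d * norm d"
    using assms(1) nd by (intro mult_strict_right_mono) auto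
  also have "\<dots> = c * (d \<bullet> d)" by (simp add: dot_square_norm power2_eq_square)
  finally show ?thesis .
qed

lemma has_real_derivative_along_line:
  fixes F :: "'a::real_normed_vector \<Rightarrow> real"
  assumes "(F has_derivative F') (at (x + t *\<^sub>R d))"
  shows "((\<lambda>s. F (x + s *\<^sub>R d)) has_real_derivative F' d) (at t)"
proof -
  have "((\<lambda>s. x + s *\<^sub>R d) has_derivative (\<lambda>s. s *\<^sub>R d)) (at t)"
    by (auto intro!: derivative_eq_intros)
  from diff_chain_at[OF this assms] show ?thesis
    unfolding has_field_derivative_def o_def
    by (rule has_derivative_eq_rhs)
      (simp add: fun_eq_iff linear_cmul[OF has_derivative_linear[OF assms]])
qed

lemma strictly_concave_on_unit_interval:
  fixes \<psi> \<psi>' \<psi>'' :: "real \<Rightarrow> real"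
  assumes d1: "\<And>s. 0 \<le> s \<Longrightarrow> s \<le> 1 \<Longrightarrow> (\<psi> has_real_derivative \<psi>' s) (at s)"
    and d2: "\<And>s. 0 \<le> s \<Longrightarrow> s \<le> 1 \<Longrightarrow> (\<psi>' has_real_derivative \<psi>'' s) (at s)"
    and neg: "\<And>s. 0 \<le> s \<Longrightarrow> s \<le> 1 \<Longrightarrow> \<psi>'' s < 0"
    and t: "0 < t" "t < 1"
  shows "(1 - t) * \<psi> 0 + t * \<psi> 1 < \<psi> t"
proof -
  obtain a where a: "0 < a" "a < t" "\<psi> t - \<psi> 0 = (t - 0) * \<psi>' a"
    using MVT2[of 0 t \<psi> \<psi>'] d1 t by auto
  obtain b where b: "t < b" "b < 1" "\<psi> 1 - \<psi> t = (1 - t) * \<psi>' b"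
    using MVT2[of t 1 \<psi> \<psi>'] d1 t by auto
  have "\<psi>' b < \<psi>' a"
  proof (rule DERIV_neg_imp_decreasing[of a b \<psi>'])
    fix s assume "a \<le> s" "s \<le> b"
    then show "\<exists>y. (\<psi>' has_real_derivative y) (at s) \<and> y < 0"
      using a b d2 neg by (intro exI[of _ "\<psi>'' s"]) auto
  qed (use a b in simp)
  then have "0 < t * (1 - t) * (\<psi>' a - \<psi>' b)" using t by simp
  also have "\<dots> = \<psi> t - ((1 - t) * \<psi> 0 + t * \<psi> 1)"
    using a(3) b(3) by algebra
  finally show ?thesis by simp
qed

lemma strictly_concave_local_max_imp_strict_max:
  fixes g :: "'a::real_normed_vector \<Rightarrow> real"
  assumes S: "convex S" and x: "x \<in> S" and e: "e > 0"
    and local: "\<And>z. z \<in> S \<Longrightarrow> 0 < dist z x \<Longrightarrow> dist z x < e \<Longrightarrow> g z \<le> g x"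
    and concave: "\<And>u v t. u \<in> S \<Longrightarrow> v \<in> S \<Longrightarrow> u \<noteq> v \<Longrightarrow> 0 < t \<Longrightarrow> t < 1 \<Longrightarrow>
                    (1 - t) * g u + t * g v < g ((1 - t) *\<^sub>R u + t *\<^sub>R v)"
    and y: "y \<in> S" "y \<noteq> x"
  shows "g y < g x"
proof (rule ccontr)
  assume "\<not> g y < g x"
  define t where "t = min (1/2) (e / (2 * dist y x))"
  define z where "z = (1 - t) *\<^sub>R x + t *\<^sub>R y"
  have dyx: "dist y x > 0" using y by simp
  have t: "0 < t" "t < 1" "t * dist y x < e"
    using e dyx by (auto simp: t_def min_def field_simps)
  have "z \<in> S" using convexD[OF S x y(1), of "1 - t" t] t by (simp add: z_def)
  moreover have "dist z x = t * dist y x"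
  proof -
    have "z - x = t *\<^sub>R (y - x)" by (simp add: z_def algebra_simps)
    then show ?thesis using t by (simp add: dist_norm)
  qed
  moreover have "g x < g z"
  proof -
    have "t * g x \<le> t * g y" using \<open>\<not> g y < g x\<close> t by (intro mult_left_mono) auto
    then show ?thesis
      using concave[OF x y(1) y(2)[symmetric] t(1,2)] by (simp add: z_def algebra_simps)
  qed
  ultimately show False using local dyx t by force
qed

lemma strict_local_maximizer_imp_local_maximizer:
  "strict_local_maximizer g Y x \<Longrightarrow> local_maximizer g Y x"
  unfolding strict_local_maximizer_def local_maximizer_def by (meson less_imp_le)

locale clique_program =
  fixes E :: "'n::finite \<Rightarrow> 'n \<Rightarrow> bool"
    and \<Phi> :: "real^'n \<Rightarrow> real"
    and grad :: "real^'n \<Rightarrow> real^'n"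
    and H :: "real^'n \<Rightarrow> real^'n^'n"
    and X :: "(real^'n) set"
  assumes graph: "simple_graph E"
    and X_sup: "std_simplex \<subseteq> X"
    and d1: "\<And>x. x \<in> X \<Longrightarrow> (\<Phi> has_derivative (\<lambda>h. grad x \<bullet> h)) (at x)"
    and d2: "\<And>x. x \<in> X \<Longrightarrow> (grad has_derivative (\<lambda>h. H x *v h)) (at x)"
    and C2: "\<And>x. x \<in> std_simplex \<Longrightarrow> onorm (\<lambda>v. H x *v v) < 2"
    and C3: "\<And>x y. x \<in> std_simplex \<Longrightarrow> y \<in> perms_of x \<Longrightarrow> \<Phi> y = \<Phi> x"
begin

definition obj :: "real^'n \<Rightarrow> real" where
  "obj x = x \<bullet> (adj_matrix E *v x) + \<Phi> x"

lemma obj_on_clique_face: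
  assumes "is_clique E T" "x \<in> simplex_face T"
  shows "obj x = 1 - x \<bullet> x + \<Phi> x"
  using assms clique_quadratic_form[OF graph] simplex_face_subset_clique_simplex[OF assms(1)]
  by (auto simp: obj_def clique_simplex_def std_simplex_def)

lemma continuous_on_obj: "continuous_on std_simplex obj"
proof -
  have "continuous_on std_simplex \<Phi>"
    using X_sup d1 by (intro continuous_at_imp_continuous_on ballI has_derivative_continuous) auto
  moreover have "continuous_on std_simplex (\<lambda>x. x \<bullet> (adj_matrix E *v x))"
    by (intro continuous_intros linear_continuous_on matrix_vector_mul_bounded_linear)
  ultimately show ?thesis
    unfolding obj_def[abs_def] by (rule continuous_on_add[rotated])
qed

lemma obj_transpose_coords:
  assumes T: "is_clique E T" and x: "x \<in> simplex_face T" and ij: "i \<in> T" "j \<in> T"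
  shows "obj (\<chi> k. x $ Transposition.transpose i j k) = obj x"
proof -
  let ?y = "\<chi> k. x $ Transposition.transpose i j k"
  have y: "?y \<in> simplex_face T" by (rule transpose_coords_in_simplex_face[OF x ij])
  have "\<Phi> ?y = \<Phi> x"
    using x y by (intro C3 transpose_coords_in_perms_of) (auto simp: simplex_face_def)
  moreover have "?y \<bullet> ?y = x \<bullet> x" by (rule inner_permute_coords) (simp add: permutes_swap_id)
  ultimately show ?thesis using obj_on_clique_face[OF T] x y by simp
qed

lemma obj_strictly_concave_on_clique_face:
  assumes T: "is_clique E T" and u: "u \<in> simplex_face T" and v: "v \<in> simplex_face T"
    and uv: "u \<noteq> v" and t: "0 < t" "t < 1"
  shows "(1 - t) * obj u + t * obj v < obj ((1 - t) *\<^sub>R u + t *\<^sub>R v)"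
proof -
  define d where "d = v - u"
  define p where "p s = u + s *\<^sub>R d" for s
  define \<psi> where "\<psi> s = \<Phi> (p s) - p s \<bullet> p s" for s
  define \<psi>' where "\<psi>' s = (grad (p s) - 2 *\<^sub>R p s) \<bullet> d" for s
  define \<psi>'' where "\<psi>'' s = (H (p s) *v d) \<bullet> d - 2 * (d \<bullet> d)" for s
  have face: "p s \<in> simplex_face T" if "0 \<le> s" "s \<le> 1" for s
    using convexD[OF convex_simplex_face u v, of "1 - s" s] that
    by (simp add: p_def d_def algebra_simps)
  then have simplex: "p s \<in> std_simplex" if "0 \<le> s" "s \<le> 1" for s
    using that by (simp add: simplex_face_def)
  have obj_p: "obj (p s) = 1 + \<psi> s" if "0 \<le> s" "s \<le> 1" for s
    using obj_on_clique_face[OF T face[OF that]] by (simp add: \<psi>_def)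
  have "(1 - t) * \<psi> 0 + t * \<psi> 1 < \<psi> t"
  proof (rule strictly_concave_on_unit_interval[OF _ _ _ t])
    fix s :: real assume s: "0 \<le> s" "s \<le> 1"
    then have X: "p s \<in> X" using simplex X_sup by blast
    have "((\<lambda>q. \<Phi> q - q \<bullet> q) has_derivative (\<lambda>h. (grad (p s) - 2 *\<^sub>R p s) \<bullet> h)) (at (p s))"
      by (rule has_derivative_eq_rhs[OF has_derivative_diff[OF d1[OF X]
            has_derivative_inner[OF has_derivative_ident has_derivative_ident]]])
        (simp add: fun_eq_iff inner_diff_right inner_commute)
    then show "(\<psi> has_real_derivative \<psi>' s) (at s)"
      unfolding \<psi>_def \<psi>'_def p_def by (rule has_real_derivative_along_line)
    have "((\<lambda>q. (grad q - 2 *\<^sub>R q) \<bullet> d) has_derivative (\<lambda>h. (H (p s) *v h - 2 *\<^sub>R h) \<bullet> d))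
        (at (p s))"
      by (intro derivative_intros d2[OF X])
    then show "(\<psi>' has_real_derivative \<psi>'' s) (at s)"
      unfolding \<psi>'_def \<psi>''_def p_def
      by (rule has_real_derivative_along_line[THEN DERIV_cong]) (simp add: inner_diff_left)
    show "\<psi>'' s < 0"
      using inner_matrix_vector_lt_onorm[OF C2[OF simplex[OF s]], of d] uv
      by (simp add: \<psi>''_def d_def)
  qed
  moreover have "obj u = 1 + \<psi> 0" "obj v = 1 + \<psi> 1" "obj (p t) = 1 + \<psi> t"
    using obj_p[of 0] obj_p[of 1] obj_p[of t] t by (simp_all add: p_def d_def)
  moreover have "(1 - t) *\<^sub>R u + t *\<^sub>R v = p t" by (simp add: p_def d_def algebra_simps)
  ultimately show ?thesis by (simp add: algebra_simps)
qed

lemma clique_face_local_max: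
  assumes T: "is_clique E T" and x: "x \<in> simplex_face T" and e: "e > 0"
    and local: "\<And>z. z \<in> simplex_face T \<Longrightarrow> 0 < dist z x \<Longrightarrow> dist z x < e \<Longrightarrow> obj z \<le> obj x"
  shows clique_face_local_max_strict: "\<And>y. y \<in> simplex_face T \<Longrightarrow> y \<noteq> x \<Longrightarrow> obj y < obj x"
    and clique_face_local_max_eq_clique_vec: "x = clique_vec T"
proof -
  show strict: "obj y < obj x" if "y \<in> simplex_face T" "y \<noteq> x" for y
    using strictly_concave_local_max_imp_strict_max[OF convex_simplex_face x e local
        obj_strictly_concave_on_clique_face[OF T] that] .
  show "x = clique_vec T"
    using symmetric_unique_maximizer_eq_clique_vec[OF x strict obj_transpose_coords[OF T]] .
qed

lemma local_maximizer_in_clique_face_eq_clique_vec: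
  assumes T: "is_clique E T" and x: "x \<in> simplex_face T"
    and lm: "local_maximizer obj (clique_simplex E) x"
  shows "x = clique_vec T"
proof -
  obtain e where "e > 0"
    and local: "\<And>z. z \<in> clique_simplex E \<Longrightarrow> 0 < dist z x \<Longrightarrow> dist z x < e \<Longrightarrow> obj z \<le> obj x"
    using lm by (auto simp: local_maximizer_def)
  show ?thesis
    using clique_face_local_max_eq_clique_vec[OF T x \<open>e > 0\<close>] local
      simplex_face_subset_clique_simplex[OF T] by blast
qed

lemma local_maximizer_imp_maximal_clique:
  assumes lm: "local_maximizer obj (clique_simplex E) x"
  shows "maximal_clique E (supp x)" "x = clique_vec (supp x)"
proof -
  have x: "x \<in> std_simplex" and S: "is_clique E (supp x)"
    using lm by (auto simp: local_maximizer_def clique_simplex_def)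
  show "x = clique_vec (supp x)"
    by (rule local_maximizer_in_clique_face_eq_clique_vec[OF S simplex_face_supp[OF x] lm])
  have "D = supp x" if D: "is_clique E D" "supp x \<subseteq> D" for D
  proof -
    have "x \<in> simplex_face D" using x D(2) by (simp add: simplex_face_def)
    then show ?thesis using local_maximizer_in_clique_face_eq_clique_vec[OF D(1) _ lm] supp_clique_vec by metis
  qed
  then show "maximal_clique E (supp x)" using S by (simp add: maximal_clique_def)
qed

lemma maximal_clique_strict_local_maximizer:
  assumes C: "maximal_clique E C"
  shows "strict_local_maximizer obj (clique_simplex E) (clique_vec C)"
proof -
  have T: "is_clique E C" using C by (simp add: maximal_clique_def)
  have ne: "C \<noteq> {}" by (rule maximal_clique_nonempty[OF C])
  have "continuous_on (simplex_face C) obj"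
    by (rule continuous_on_subset[OF continuous_on_obj]) (auto simp: simplex_face_def)
  then obtain z where z: "z \<in> simplex_face C" and max: "\<And>y. y \<in> simplex_face C \<Longrightarrow> obj y \<le> obj z"
    using continuous_attains_sup[OF compact_simplex_face] clique_vec_in_simplex_face[OF ne] by blast
  have "z = clique_vec C"
    by (rule clique_face_local_max_eq_clique_vec[OF T z zero_less_one max])
  then have strict: "\<And>y. y \<in> simplex_face C \<Longrightarrow> y \<noteq> clique_vec C \<Longrightarrow> obj y < obj (clique_vec C)"
    using clique_face_local_max_strict[OF T z zero_less_one max] by blast
  have "obj y < obj (clique_vec C)"
    if y: "y \<in> clique_simplex E" "0 < dist y (clique_vec C)" "dist y (clique_vec C) < 1 / real (card C)"
    for y
  proof -
    have "C \<subseteq> supp y" using supp_superset_near_clique_vec y(3) by blast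
    then have "supp y = C" using C y(1) by (auto simp: maximal_clique_def clique_simplex_def)
    then show ?thesis using strict y by (auto simp: simplex_face_def clique_simplex_def)
  qed
  moreover have "clique_vec C \<in> clique_simplex E"
    using simplex_face_subset_clique_simplex[OF T] clique_vec_in_simplex_face[OF ne] by blast
  moreover have "0 < 1 / real (card C)" using ne by (simp add: card_gt_0_iff)
  ultimately show ?thesis unfolding strict_local_maximizer_def by blast
qed

end

theorem proposition2:
  fixes E :: "'n::finite \<Rightarrow> 'n \<Rightarrow> bool"
    and \<Phi> :: "real^'n \<Rightarrow> real"
    and grad :: "real^'n \<Rightarrow> real^'n"
    and H :: "real^'n \<Rightarrow> real^'n^'n"
    and X :: "(real^'n) set"
  assumes graph: "simple_graph E"
    and X_open: "open X" and X_sup: "std_simplex \<subseteq> X"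
    and d1: "\<And>x. x \<in> X \<Longrightarrow> (\<Phi> has_derivative (\<lambda>h. grad x \<bullet> h)) (at x)"
    and d2: "\<And>x. x \<in> X \<Longrightarrow> (grad has_derivative (\<lambda>h. H x *v h)) (at x)"
    and H_cont: "continuous_on X H"
    and C1: "\<And>x v. x \<in> std_simplex \<Longrightarrow> 0 \<le> v \<bullet> (H x *v v)"
    and C2: "\<And>x. x \<in> std_simplex \<Longrightarrow> onorm (\<lambda>v. H x *v v) < 2"
    and C3: "\<And>x y. x \<in> std_simplex \<Longrightarrow> y \<in> perms_of x \<Longrightarrow> \<Phi> y = \<Phi> x"
  defines "f \<equiv> (\<lambda>x. x \<bullet> (adj_matrix E *v x) + \<Phi> x)"
  shows "(\<forall>x \<in> clique_simplex E.
            local_maximizer f (clique_simplex E) x \<longleftrightarrow> (\<exists>C. maximal_clique E C \<and> x = clique_vec C))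
       \<and> (\<forall>x. local_maximizer f (clique_simplex E) x \<longrightarrow> strict_local_maximizer f (clique_simplex E) x)"
proof -
  interpret clique_program E \<Phi> grad H X
    using graph X_sup d1 d2 C2 C3 by unfold_locales
  have "f = obj" by (simp add: f_def obj_def fun_eq_iff)
  then show ?thesis
    using local_maximizer_imp_maximal_clique maximal_clique_strict_local_maximizer
      strict_local_maximizer_imp_local_maximizer by metis
qed

end
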